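(* Let $0\le v\le 1$, $r\neq 0$ and $a,b>0$, and let $\mu:=\min\{1-v,v\}$. If either (i) $r>0$ and $0<a\le b$, or (ii) $r<0$ and $a\ge b>0$, then $$G_v(a,b)\le \left\{1+\frac{\mu^2}{2}\left(\ln_r\frac{a}{b}\right)^2\right\}G_v(a,b)\le A_v(a,b).$$
   Context: For $a,b>0$ and $0\le v\le 1$: $A_v(a,b):=(1-v)a+vb$ and $G_v(a,b):=a^{1-v}b^v$. For $x>0$ and $r\neq 0$, the $r$-logarithm is $\ln_r x:=\frac{x^r-1}{r}$. *)

theory Defs
  imports Complex_Main
begin

definition wam :: "real \<Rightarrow> real \<Rightarrow> real \<Rightarrow> real" where
  "wam v a b = (1 - v) * a + v * b"

definition wgm :: "real \<Rightarrow> real \<Rightarrow> real \<Rightarrow> real" where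
  "wgm v a b = a powr (1 - v) * b powr v"

definition lnr :: "real \<Rightarrow> real \<Rightarrow> real" where
  "lnr r x = (x powr r - 1) / r"

end

(* Put t = ln (a/b). Then A_v(a,b) = G_v(a,b) f(t) with f(t) = (1-v) e^(vt) + v e^(-(1-v)t).
   Since f(0) = 1, f'(0) = 0 and f'' >= mu^2 everywhere, f(t) >= 1 + mu^2 t^2 / 2.
   Either sign hypothesis means r t <= 0, and then |ln_r (a/b)| = |e^(rt) - 1| / |r| <= |t|. *)
theory Submission
  imports Defs "HOL-Analysis.Analysis"
begin

lemma f''_ge_imp_above_quadratic_tangent:
  fixes f f' f'' :: "real \<Rightarrow> real"
  assumes f': "\<And>x. (f has_real_derivative f' x) (at x)"
    and f'': "\<And>x. (f' has_real_derivative f'' x) (at x)"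
    and ge: "\<And>x. c \<le> f'' x"
  shows "f x0 + f' x0 * (x - x0) + c / 2 * (x - x0)\<^sup>2 \<le> f x"
proof -
  define g where "g y = f y - c / 2 * y\<^sup>2" for y
  have g': "(g has_real_derivative f' y - c * y) (at y)" for y
    unfolding g_def by (auto intro!: derivative_eq_intros f')
  have "convex_on UNIV g"
    by (rule f''_ge0_imp_convex[where f' = "\<lambda>y. f' y - c * y" and f'' = "\<lambda>y. f'' y - c"])
       (auto intro!: derivative_eq_intros g' f'' simp: ge)
  then have "(f' x0 - c * x0) * (x - x0) \<le> g x - g x0"
    by (rule convex_on_imp_above_tangent) (auto simp: g')
  then show ?thesis
    unfolding g_def by (simp add: power2_eq_square algebra_simps)
qed

lemma exp_weighted_sum_ge:
  fixes v t :: real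
  assumes "0 < v" "v \<le> 1 / 2"
  shows "v / (1 - v) \<le> v * exp (v * t) + (1 - v) * exp (- (1 - v) * t)"
proof -
  \<comment> \<open>Jensen for exp; c is chosen so that the weights turn into v and 1 - v,
    and the exponent collapses to (1 - 2 v) c \<ge> c.\<close>
  define c where "c = ln (v / (1 - v))"
  have exp_c: "exp c = v / (1 - v)" and "c \<le> 0"
    using assms by (simp_all add: c_def)
  have "exp c \<le> exp ((1 - v) * (c + v * t) + v * (- c - (1 - v) * t))"
    using \<open>c \<le> 0\<close> assms by (simp add: algebra_simps mult_nonpos_nonneg)
  also have "\<dots> \<le> (1 - v) * exp (c + v * t) + v * exp (- c - (1 - v) * t)"
    using convex_onD[OF exp_convex, of v "c + v * t" "- c - (1 - v) * t"] assms
    by (simp add: algebra_simps)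
  also have "\<dots> = v * exp (v * t) + (1 - v) * exp (- (1 - v) * t)"
    using assms by (simp add: exp_add exp_diff exp_minus exp_c field_simps)
  finally show ?thesis using exp_c by simp
qed

lemma exp_young_refined_half:
  fixes v t :: real
  assumes "0 < v" "v \<le> 1 / 2"
  shows "1 + v\<^sup>2 / 2 * t\<^sup>2 \<le> (1 - v) * exp (v * t) + v * exp (- (1 - v) * t)"
proof -
  let ?f = "\<lambda>t. (1 - v) * exp (v * t) + v * exp (- (1 - v) * t)"
  let ?f' = "\<lambda>t. v * (1 - v) * (exp (v * t) - exp (- (1 - v) * t))"
  let ?f'' = "\<lambda>t. v * (1 - v) * (v * exp (v * t) + (1 - v) * exp (- (1 - v) * t))"
  have "v\<^sup>2 \<le> ?f'' x" for x
    using mult_left_mono[OF exp_weighted_sum_ge[OF assms, of x], of "v * (1 - v)"] assms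
    by (simp add: power2_eq_square)
  then have "?f 0 + ?f' 0 * (t - 0) + v\<^sup>2 / 2 * (t - 0)\<^sup>2 \<le> ?f t"
    by (intro f''_ge_imp_above_quadratic_tangent) (auto intro!: derivative_eq_intros simp: algebra_simps)
  then show ?thesis by simp
qed

lemma exp_young_refined:
  fixes v t :: real
  assumes "0 \<le> v" "v \<le> 1"
  shows "1 + (min (1 - v) v)\<^sup>2 / 2 * t\<^sup>2 \<le> (1 - v) * exp (v * t) + v * exp (- (1 - v) * t)"
proof -
  consider "v = 0" | "0 < v" "v \<le> 1 / 2" | "1 / 2 < v" "v < 1" | "v = 1"
    using assms by fastforce
  then show ?thesis
  proof cases
    case 2
    then show ?thesis using exp_young_refined_half[OF 2] by simp
  next
    case 3
    \<comment> \<open>The substitution v \<mapsto> 1 - v, t \<mapsto> - t leaves the right-hand side invariant.\<close>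
    then have "1 + (1 - v)\<^sup>2 / 2 * (- t)\<^sup>2
        \<le> (1 - (1 - v)) * exp ((1 - v) * - t) + (1 - v) * exp (- (1 - (1 - v)) * - t)"
      by (intro exp_young_refined_half) auto
    with 3 show ?thesis by (simp add: algebra_simps)
  qed simp_all
qed

lemma wam_eq_wgm_mult:
  fixes v a b :: real
  assumes "0 < a" "0 < b"
  shows "wam v a b = wgm v a b * ((1 - v) * exp (v * ln (a / b)) + v * exp (- (1 - v) * ln (a / b)))"
proof -
  have "wgm v a b * exp (v * ln (a / b)) = a" "wgm v a b * exp (- (1 - v) * ln (a / b)) = b"
    using assms by (simp_all add: wgm_def powr_def ln_div exp_add[symmetric] algebra_simps)
  then show ?thesis
    unfolding wam_def by (simp add: algebra_simps)
qed

lemma wam_ge_refined_wgm: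
  fixes v a b :: real
  assumes "0 \<le> v" "v \<le> 1" "0 < a" "0 < b"
  shows "(1 + (min (1 - v) v)\<^sup>2 / 2 * (ln (a / b))\<^sup>2) * wgm v a b \<le> wam v a b"
proof -
  have "(1 + (min (1 - v) v)\<^sup>2 / 2 * (ln (a / b))\<^sup>2) * wgm v a b
      \<le> ((1 - v) * exp (v * ln (a / b)) + v * exp (- (1 - v) * ln (a / b))) * wgm v a b"
    using exp_young_refined[OF assms(1,2)] by (rule mult_right_mono) (simp add: wgm_def)
  then show ?thesis
    using assms by (simp add: wam_eq_wgm_mult mult.commute)
qed

lemma abs_lnr_le_abs_ln:
  fixes r x :: real
  assumes "0 < x" "r * ln x \<le> 0"
  shows "\<bar>lnr r x\<bar> \<le> \<bar>ln x\<bar>"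
proof (cases "r = 0")
  case False
  have "1 + r * ln x \<le> exp (r * ln x)" "exp (r * ln x) \<le> 1"
    using assms by (simp_all add: exp_ge_add_one_self)
  then have "\<bar>exp (r * ln x) - 1\<bar> \<le> \<bar>r * ln x\<bar>"
    using assms by arith
  then show ?thesis
    using assms False by (simp add: lnr_def powr_def abs_mult divide_le_eq mult.commute)
qed (simp add: lnr_def)

theorem corollary2p3:
  fixes v r a b :: real
  assumes "0 \<le> v" "v \<le> 1" "r \<noteq> 0" "a > 0" "b > 0"
    and "(r > 0 \<and> a \<le> b) \<or> (r < 0 \<and> b \<le> a)"
  defines "\<mu> \<equiv> min (1 - v) v"
  shows "wgm v a b \<le> (1 + \<mu>\<^sup>2 / 2 * (lnr r (a / b))\<^sup>2) * wgm v a b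
    \<and> (1 + \<mu>\<^sup>2 / 2 * (lnr r (a / b))\<^sup>2) * wgm v a b \<le> wam v a b"
proof
  have "0 < wgm v a b"
    using assms by (simp add: wgm_def)
  then show "wgm v a b \<le> (1 + \<mu>\<^sup>2 / 2 * (lnr r (a / b))\<^sup>2) * wgm v a b"
    by simp
next
  have "r * ln (a / b) \<le> 0"
    using assms(4-6) by (auto simp: mult_nonneg_nonpos mult_nonpos_nonneg)
  then have "(lnr r (a / b))\<^sup>2 \<le> (ln (a / b))\<^sup>2"
    using abs_lnr_le_abs_ln assms by (simp add: abs_le_square_iff)
  then have "(1 + \<mu>\<^sup>2 / 2 * (lnr r (a / b))\<^sup>2) * wgm v a b
      \<le> (1 + \<mu>\<^sup>2 / 2 * (ln (a / b))\<^sup>2) * wgm v a b"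
    using assms by (intro mult_right_mono add_left_mono mult_left_mono) (auto simp: wgm_def)
  also have "\<dots> \<le> wam v a b"
    unfolding \<mu>_def using assms by (intro wam_ge_refined_wgm) auto
  finally show "(1 + \<mu>\<^sup>2 / 2 * (lnr r (a / b))\<^sup>2) * wgm v a b \<le> wam v a b" .
qed

end
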